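(* For every integer $n$ with $n \equiv 1 \pmod{3}$ and $4 \le n \le 52$, there exists a permutation $\sigma$ of $\mathbb{Z}_n = \{0,\dots,n-1\}$ such that $f_\sigma(\delta) \in \{a, a+2\}$ for every $\delta \in \{1,\dots,n-1\}$, where $a = (n(n+1)-2)/3$.
   Context: For a permutation $\sigma$ of $\mathbb{Z}_n$, the shift correlation at shift $\delta$ is $f_\sigma(\delta) = \sum_{j=0}^{n-1} \lvert \sigma((j+\delta) \bmod n) - \sigma(j) \rvert$, where $\sigma$ takes values in $\{0,\dots,n-1\}$ and the absolute value is of ordinary integers. Such a permutation is called a near-perfect permutation. *)

theory Defs
  imports Main
begin

definition shift_corr :: "nat \<Rightarrow> (nat \<Rightarrow> nat) \<Rightarrow> nat \<Rightarrow> int" where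
  "shift_corr n \<sigma> \<delta> = (\<Sum>j<n. \<bar>int (\<sigma> ((j + \<delta>) mod n)) - int (\<sigma> j)\<bar>)"

end

theory Submission
  imports Defs
begin

text \<open>The witnesses are explicit permutations found by computer search. Writing a
  permutation \<sigma> of {0..<n} as the list xs = [\<sigma> 0, ..., \<sigma> (n - 1)], the shift
  correlation at \<delta> is the l1-distance between rotate \<delta> xs and xs, so a witness is
  certified by computing n - 1 such distances, each rotation obtained from the
  previous one by rotate1.\<close>

fun rotations :: "nat \<Rightarrow> 'a list \<Rightarrow> 'a list list" where
  "rotations 0 xs = []"
| "rotations (Suc k) xs = rotate1 xs # rotations k (rotate1 xs)"

text \<open>Unfolding numeral counters directly keeps the evaluation of the certificates
  below from expanding numerals into towers of Suc.\<close>

lemma rotations_numeral [simp]: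
  "rotations (numeral k) xs = rotate1 xs # rotations (numeral k - 1) (rotate1 xs)"
  by (simp add: numeral_eq_Suc)

lemma rotations_eq_map_rotate: "rotations k xs = map (\<lambda>d. rotate d xs) [1..<Suc k]"
proof (induction k arbitrary: xs)
  case 0
  then show ?case by simp
next
  case (Suc k)
  have "[1..<Suc (Suc k)] = 1 # map Suc [1..<Suc k]"
    by (simp add: map_Suc_upt upt_conv_Cons)
  then show ?case
    using Suc.IH by (simp add: rotate1_rotate_swap)
qed

definition l1_dist :: "nat list \<Rightarrow> nat list \<Rightarrow> int" where
  "l1_dist ys xs = (\<Sum>(y, x) \<leftarrow> zip ys xs. \<bar>int y - int x\<bar>)"

lemma shift_corr_nth:
  assumes "length xs = n"
  shows "shift_corr n ((!) xs) d = l1_dist (rotate d xs) xs"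
proof -
  have "l1_dist (rotate d xs) xs = (\<Sum>j<n. \<bar>int (rotate d xs ! j) - int (xs ! j)\<bar>)"
    unfolding l1_dist_def using assms
    by (simp add: sum_list_sum_nth atLeast0LessThan case_prod_beta)
  also have "\<dots> = shift_corr n ((!) xs) d"
    unfolding shift_corr_def using assms
    by (intro sum.cong refl) (simp add: nth_rotate add.commute)
  finally show ?thesis ..
qed

lemma bij_betw_nth_distinct:
  assumes "distinct xs" and "set xs \<subseteq> {..<length xs}"
  shows "bij_betw ((!) xs) {0..<length xs} {0..<length xs}"
proof -
  have "set xs = {..<length xs}"
    using assms by (intro card_subset_eq) (simp_all add: distinct_card)
  then show ?thesis
    using assms(1) by (simp add: bij_betw_nth lessThan_atLeast0)
qed

lemma shift_corr_values_by_rotations: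
  assumes "length xs = n" and "distinct xs" and "set xs \<subseteq> {..<n}"
    and "\<forall>ys\<in>set (rotations (n - 1) xs). l1_dist ys xs \<in> A"
  shows "\<exists>\<sigma>. bij_betw \<sigma> {0..<n} {0..<n} \<and> (\<forall>\<delta>\<in>{1..<n}. shift_corr n \<sigma> \<delta> \<in> A)"
proof (intro exI conjI ballI)
  show "bij_betw ((!) xs) {0..<n} {0..<n}"
    using assms bij_betw_nth_distinct by blast
  fix \<delta> assume "\<delta> \<in> {1..<n}"
  then have "rotate \<delta> xs \<in> set (rotations (n - 1) xs)"
    unfolding rotations_eq_map_rotate by auto
  then show "shift_corr n ((!) xs) \<delta> \<in> A"
    using assms(1,4) shift_corr_nth by metis
qed

definition near_perfect_list :: "nat \<Rightarrow> nat list \<Rightarrow> bool" where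
  "near_perfect_list n xs \<longleftrightarrow>
     (let a = int ((n * (n + 1) - 2) div 3) in
      length xs = n \<and> distinct xs \<and> set xs \<subseteq> {..<n} \<and>
      (\<forall>ys\<in>set (rotations (n - 1) xs). l1_dist ys xs \<in> {a, a + 2}))"

lemma near_perfect_permutation_of_list:
  assumes "near_perfect_list n xs"
  shows "\<exists>\<sigma>. bij_betw \<sigma> {0..<n} {0..<n} \<and>
           (\<forall>\<delta>\<in>{1..<n}. shift_corr n \<sigma> \<delta> \<in>
              {int ((n * (n + 1) - 2) div 3), int ((n * (n + 1) - 2) div 3) + 2})"
  using assms unfolding near_perfect_list_def Let_def
  by (intro shift_corr_values_by_rotations) auto

lemma near_perfect_lists:
  "near_perfect_list 4 [0, 2, 3, 1]"
  "near_perfect_list 7 [3, 6, 5, 2, 0, 4, 1]"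
  "near_perfect_list 10 [5, 2, 3, 9, 7, 6, 1, 8, 0, 4]"
  "near_perfect_list 13 [4, 3, 11, 8, 6, 9, 1, 12, 10, 5, 2, 7, 0]"
  "near_perfect_list 16 [2, 15, 12, 13, 11, 0, 6, 4, 14, 3, 5, 7, 10, 1, 9, 8]"
  "near_perfect_list 19
     [5, 1, 9, 12, 3, 4, 13, 7, 15, 10, 0, 11, 6, 16, 17, 18, 2, 14, 8]"
  "near_perfect_list 22
     [3, 8, 1, 12, 14, 18, 21, 0, 17, 20, 11, 2, 15, 9, 10, 7, 5, 4, 16, 6, 19, 13]"
  "near_perfect_list 25
     [11, 20, 6, 21, 23, 19, 2, 22, 1, 7, 9, 3, 14, 12, 5, 17, 15, 16, 10, 4, 8, 18,
     24, 13, 0]"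
  "near_perfect_list 28
     [24, 9, 25, 3, 1, 27, 6, 0, 22, 20, 26, 21, 16, 10, 13, 11, 7, 23, 18, 12, 2, 5,
     17, 15, 14, 8, 19, 4]"
  "near_perfect_list 31
     [1, 0, 2, 24, 16, 30, 25, 8, 28, 13, 11, 12, 26, 7, 21, 15, 5, 19, 22, 23, 20,
     4, 18, 6, 10, 17, 27, 14, 3, 9, 29]"
  "near_perfect_list 34
     [19, 18, 10, 29, 5, 6, 16, 17, 2, 0, 13, 32, 14, 12, 9, 33, 15, 21, 25, 1, 3,
     27, 7, 31, 30, 11, 23, 4, 22, 8, 20, 28, 24, 26]"
  "near_perfect_list 37
     [9, 36, 17, 34, 15, 18, 16, 11, 1, 27, 29, 26, 23, 7, 33, 32, 19, 24, 2, 4, 28,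
     6, 3, 13, 31, 0, 5, 30, 10, 21, 20, 22, 35, 12, 14, 8, 25]"
  "near_perfect_list 40
     [5, 29, 22, 36, 26, 19, 8, 16, 24, 4, 38, 21, 18, 25, 10, 11, 28, 39, 32, 9, 34,
     35, 0, 33, 15, 17, 7, 27, 37, 30, 14, 3, 6, 20, 2, 1, 13, 23, 12, 31]"
  "near_perfect_list 43
     [28, 0, 13, 4, 2, 22, 10, 14, 20, 3, 18, 40, 39, 35, 5, 27, 17, 9, 25, 29, 37,
     7, 42, 16, 41, 12, 21, 30, 31, 1, 8, 38, 33, 15, 34, 6, 19, 36, 32, 11, 24, 26,
     23]"
  "near_perfect_list 46
     [34, 20, 26, 7, 43, 42, 23, 41, 17, 25, 11, 15, 14, 8, 39, 36, 38, 3, 29, 27,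
     37, 40, 33, 12, 31, 9, 35, 22, 0, 4, 45, 5, 24, 28, 1, 19, 6, 13, 21, 32, 18,
     16, 30, 44, 2, 10]"
  "near_perfect_list 49
     [35, 41, 8, 11, 32, 23, 1, 37, 10, 15, 42, 0, 44, 5, 3, 48, 46, 26, 22, 47, 43,
     13, 33, 4, 6, 2, 27, 28, 14, 17, 24, 21, 45, 31, 29, 25, 20, 16, 7, 38, 36, 39,
     18, 40, 12, 34, 9, 30, 19]"
  "near_perfect_list 52
     [20, 47, 51, 6, 29, 37, 10, 15, 36, 28, 44, 14, 22, 50, 24, 38, 48, 33, 23, 17,
     19, 3, 2, 7, 8, 12, 46, 41, 13, 1, 32, 9, 49, 26, 18, 0, 43, 27, 25, 21, 31, 16,
     45, 5, 42, 39, 35, 30, 11, 40, 4, 34]"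
  by (simp_all add: near_perfect_list_def l1_dist_def)

theorem theorem6:
  fixes n :: nat
  assumes "n mod 3 = 1" and "4 \<le> n" and "n \<le> 52"
  shows "\<exists>\<sigma>. bij_betw \<sigma> {0..<n} {0..<n} \<and>
           (\<forall>\<delta>\<in>{1..<n}. shift_corr n \<sigma> \<delta> \<in>
              {int ((n * (n + 1) - 2) div 3), int ((n * (n + 1) - 2) div 3) + 2})"
proof -
  have "n \<in> {4, 7, 10, 13, 16, 19, 22, 25, 28, 31, 34, 37, 40, 43, 46, 49, 52}"
    using assms by simp presburger
  then obtain xs where "near_perfect_list n xs"
    using near_perfect_lists by auto
  then show ?thesis
    by (rule near_perfect_permutation_of_list)
qed

end
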